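(* For all $\epsilon\in(0,1/2)$, $\delta\in(0,1)$, all $c,d\in\mathbb{N}^+$ with $c>1$, and all $\gamma>0$, $$G^d_{\mathcal{U}^c\to\mathcal{C}}(\epsilon,\delta,n)\in\Omega(n^{1-\gamma})\quad\text{as } n\to\infty.$$
   Context: Let $\mathcal{B}=\{0,1\}$, let $\mathcal{B}^*$ be the set of finite binary strings and $|h|$ the length of $h\in\mathcal{B}^*$. For $n\in\mathbb{N}^+$, $H^n$ is the set of all functions $\mathcal{B}^n\to\mathcal{B}$ and $\Delta(\mathcal{B}^n)$ the set of probability distributions on $\mathcal{B}^n$. A learning problem is a pair $(f,\mathcal{P})$ with $f\in H^n$, $\mathcal{P}\in\Delta(\mathcal{B}^n)$; an $m$-sample dataset for it is the random sequence $[(x_j,f(x_j))]_{j=1}^m$ with $x_1,\dots,x_m$ i.i.d. $\sim\mathcal{P}$. The accuracy of $\hat f\in H^n$ is $\mathrm{acc}^{\mathcal{P}}_f(\hat f)=\Pr_{x\sim\mathcal{P}}[\hat f(x)=f(x)]$. For $\epsilon\in(0,1/2)$, $\delta\in(0,1)$, an algorithm $\mathcal{A}$ has an $(\epsilon,\delta)$-PAC-learning performance with an $m$-sample dataset on $(f,\mathcal{P})$ if for every $m'\ge m$, with probability at least $1-\delta$ over an $m'$-sample dataset $S$, $\mathrm{acc}^{\mathcal{P}}_f(\mathcal{A}(S))\ge 1-\epsilon$. An interpreter is a Turing machine computing a partial function $\varphi:\mathcal{B}^*\times\mathcal{B}^*\to\mathcal{B}\cup\{\bot\}$, where $\bot$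 denotes non-halting (or invalid) output. For $f\in H^n$, $|f|_\varphi=\min\{|h|:\varphi(h,x)=f(x)\ \forall x\in\mathcal{B}^n\}$ ($+\infty$ if no such $h$). The learning algorithm $\mathit{MDL}^\varphi$, on a dataset $[(x_j,y_j)]_{j=1}^m$ with $x_j\in\mathcal{B}^n$, selects $h^*$ of minimal length among all $h$ with $\varphi(h,x_j)=y_j$ for all $j$ and $\varphi(h,x)\neq\bot$ for all $x\in\mathcal{B}^n$ (ties broken arbitrarily) and outputs $x\mapsto\varphi(h^*,x)$ on $\mathcal{B}^n$. $m^{\epsilon,\delta}_\varphi(f,\mathcal{P})$ is the least $m\in\mathbb{N}^+$ such that $\mathit{MDL}^\varphi$ has an $(\epsilon,\delta)$-PAC-learning performance with an $m$-sample dataset on $(f,\mathcal{P})$ ($+\infty$ if none). For interpreters $\varphi,\psi$ and $n,d\in\mathbb{N}^+$, the sample efficiency gain is $G^d_{\varphi\to\psi}(\epsilon,\delta,n)=\sup\{ m^{\epsilon,\delta}_\psi(f,\mathcal{P})/m^{\epsilon,\delta}_\varphi(f,\mathcal{P}) : f\in H^n,\ \mathcal{P}\in\Delta(\mathcal{B}^n),\ |f|_\varphi\le n^d\}$. Turing machines have alphabet $\{0,1,b\}$ ($b$ blank), a finite state set containing an initial state and two final states accept/reject; the output is $1$ if halting in accept, $0$ if halting in reject, $\bot$ otherwise; multi-tape machines have read-only input tapes and read/write work tapes, and the transition function is a finite list of rules. $E(T)$ is a fixed prefix-free binary encoding of a machine $T$ listing its rules (of length at least 2 for every machine). For $c\in\mathbb{N}^+$,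 $\mathcal{U}^c$ is a time-bounded universal interpreter (a 2-input-tape, 3-work-tape machine): on $(p,x)$ with $n=|x|$, it checks within $n^c$ steps whether $p=E(T)u$ for a two-input-tape machine $T$ and $u\in\mathcal{B}^*$ (outputting $\bot$ if not, or if the check does not finish), then simulates $T$ on $(u,x)$ with an efficient universal simulation (Hennie–Stearns, overhead $O(t\log t)$ for $t$ simulated steps), devoting at most $n^c$ of its own steps to the simulation; it outputs $T$'s output if $T$ halts within this budget and $0$ otherwise. For fixed $p$ it runs in at most $\beta n^c$ steps for a constant $\beta$. In particular, if a Turing machine computes $g:\mathcal{B}^*\to\mathcal{B}$ in time $O(n^{c'})$ with $c'<c$, there is $h\in\mathcal{B}^*$ with $\mathcal{U}^c(h,x)=g(x)$ for all $x$ of sufficiently large length. A Boolean circuit on $n$ inputs is a DAG with a unique sink (output) whose sources are labelled by input indices in $\{1,\dots,n\}$ and whose other vertices (gates) are labelled AND, OR (two incoming edges) or NOT (one incoming edge); its size $|C|$ is its number of vertices. The circuit interpreter $\mathcal{C}$ reads a program $h=0^{\lceil\log_2 n\rceil}1\,[\text{binary expansion of } n]\,0^{|C|}1\,[\text{description of vertex } i]_{i=1}^{|C|}$, each vertex being described by its label and its parents/input index using $\max\{2\lceil\log_2|C|\rceil,\lceil\log_2 n\rceil\}$ bits beyond the label bits, so a circuit $C$ on $n$ inputs has encoding length $L(|C|,n)=2\lceil\log_2 n\rceil+2+|C|(3+\max\{2\lceil\log_2|C|\rceil,\lceil\log_2 n\rceil\})$; $\mathcal{C}(h,x)$ is the circuit's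 output on $x\in\mathcal{B}^n$, and $\bot$ if $h$ is malformed. Hence $|f|_{\mathcal{C}}=\min\{L(|C|,n): C \text{ computes } f\}$. *)

theory Defs
  imports "HOL-Probability.Probability"
begin

text \<open>Binary strings are bool lists. An interpreter is a partial function
  B* x B* -> B + {bot}; None encodes bot.\<close>

type_synonym interp = "bool list \<Rightarrow> bool list \<Rightarrow> bool option"
type_synonym dataset = "(bool list \<times> bool) list"

definition consistent :: "interp \<Rightarrow> nat \<Rightarrow> dataset \<Rightarrow> bool list \<Rightarrow> bool" where
  "consistent \<phi> n D h \<longleftrightarrow>
     (\<forall>(x,y)\<in>set D. \<phi> h x = Some y) \<and> (\<forall>x. length x = n \<longrightarrow> \<phi> h x \<noteq> None)"

definition mdl_cands :: "interp \<Rightarrow> nat \<Rightarrow> dataset \<Rightarrow> bool list set" where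
  "mdl_cands \<phi> n D =
     {h. consistent \<phi> n D h \<and> (\<forall>h'. consistent \<phi> n D h' \<longrightarrow> length h \<le> length h')}"

type_synonym tiebreak = "dataset \<Rightarrow> bool list set \<Rightarrow> bool list"

definition valid_tb :: "tiebreak \<Rightarrow> bool" where
  "valid_tb tb \<longleftrightarrow> (\<forall>D S. S \<noteq> {} \<longrightarrow> tb D S \<in> S)"

definition MDL :: "interp \<Rightarrow> tiebreak \<Rightarrow> nat \<Rightarrow> dataset \<Rightarrow> (bool list \<Rightarrow> bool) option" where
  "MDL \<phi> tb n D =
     (if mdl_cands \<phi> n D = {} then None
      else Some (\<lambda>x. the (\<phi> (tb D (mdl_cands \<phi> n D)) x)))"

definition acc :: "bool list pmf \<Rightarrow> (bool list \<Rightarrow> bool) \<Rightarrow> (bool list \<Rightarrow> bool) \<Rightarrow> real" where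
  "acc P f g = measure_pmf.prob P {x. g x = f x}"

definition mk_dataset :: "(bool list \<Rightarrow> bool) \<Rightarrow> nat \<Rightarrow> (nat \<Rightarrow> bool list) \<Rightarrow> dataset" where
  "mk_dataset f m xs = map (\<lambda>j. (xs j, f (xs j))) [0..<m]"

text \<open>m i.i.d. samples from P, as a random function on {..<m}.\<close>
definition samples :: "bool list pmf \<Rightarrow> nat \<Rightarrow> (nat \<Rightarrow> bool list) pmf" where
  "samples P m = Pi_pmf {..<m} [] (\<lambda>_. P)"

definition mdl_success ::
  "interp \<Rightarrow> tiebreak \<Rightarrow> nat \<Rightarrow> (bool list \<Rightarrow> bool) \<Rightarrow> bool list pmf \<Rightarrow> real \<Rightarrow> dataset \<Rightarrow> bool" where
  "mdl_success \<phi> tb n f P \<epsilon> D =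
     (case MDL \<phi> tb n D of None \<Rightarrow> False | Some g \<Rightarrow> acc P f g \<ge> 1 - \<epsilon>)"

definition mdl_pac ::
  "interp \<Rightarrow> tiebreak \<Rightarrow> nat \<Rightarrow> (bool list \<Rightarrow> bool) \<Rightarrow> bool list pmf \<Rightarrow> real \<Rightarrow> real \<Rightarrow> nat \<Rightarrow> bool" where
  "mdl_pac \<phi> tb n f P \<epsilon> \<delta> m \<longleftrightarrow>
     (\<forall>m'\<ge>m. measure_pmf.prob (samples P m')
                {xs. mdl_success \<phi> tb n f P \<epsilon> (mk_dataset f m' xs)} \<ge> 1 - \<delta>)"

definition sample_cx ::
  "interp \<Rightarrow> tiebreak \<Rightarrow> nat \<Rightarrow> (bool list \<Rightarrow> bool) \<Rightarrow> bool list pmf \<Rightarrow> real \<Rightarrow> real \<Rightarrow> enat" where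
  "sample_cx \<phi> tb n f P \<epsilon> \<delta> =
     (if \<exists>m\<ge>1. mdl_pac \<phi> tb n f P \<epsilon> \<delta> m
      then enat (LEAST m. m \<ge> 1 \<and> mdl_pac \<phi> tb n f P \<epsilon> \<delta> m) else \<infinity>)"

text \<open>|f|_phi for f in H^n (infinity if no program).\<close>
definition desc_len :: "interp \<Rightarrow> nat \<Rightarrow> (bool list \<Rightarrow> bool) \<Rightarrow> enat" where
  "desc_len \<phi> n f = (INF h \<in> {h. \<forall>x. length x = n \<longrightarrow> \<phi> h x = Some (f x)}. enat (length h))"

definition gain ::
  "interp \<Rightarrow> tiebreak \<Rightarrow> interp \<Rightarrow> tiebreak \<Rightarrow> real \<Rightarrow> real \<Rightarrow> nat \<Rightarrow> nat \<Rightarrow> ereal" where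
  "gain \<phi> tb\<phi> \<psi> tb\<psi> \<epsilon> \<delta> n d =
     (SUP fP \<in> {(f, P). set_pmf P \<subseteq> {x. length x = n} \<and> desc_len \<phi> n f \<le> enat (n ^ d)}.
        ereal_of_enat (sample_cx \<psi> tb\<psi> n (fst fP) (snd fP) \<epsilon> \<delta>)
        / ereal_of_enat (sample_cx \<phi> tb\<phi> n (fst fP) (snd fP) \<epsilon> \<delta>))"

section \<open>Turing machines with two read-only input tapes and W work tapes\<close>

datatype sym = S0 | S1 | Blank

text \<open>A rule (q, read, q', write, move): in state q reading the symbols 'read'
  under the 2+W heads, go to q', write 'write' on the W work tapes and move the
  2+W heads by 'move' (each in {-1,0,1}). States are naturals: 0 initial,
  1 accept, 2 reject.\<close>
type_synonym rule = "nat \<times> sym list \<times> nat \<times> sym list \<times> int list"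

datatype tm = TM (nwork: nat) (rules: "rule list")

definition wf_tm :: "tm \<Rightarrow> bool" where
  "wf_tm M \<longleftrightarrow>
     (\<forall>(q, rd, q', wr, mv) \<in> set (rules M).
        length rd = 2 + nwork M \<and> length wr = nwork M \<and> length mv = 2 + nwork M \<and>
        set mv \<subseteq> {-1, 0, 1}) \<and>
     distinct (map (\<lambda>(q, rd, _). (q, rd)) (rules M))"

type_synonym config = "nat \<times> int list \<times> (int \<Rightarrow> sym) list"

definition tape_of :: "bool list \<Rightarrow> int \<Rightarrow> sym" where
  "tape_of xs i = (if 0 \<le> i \<and> i < int (length xs) then (if xs ! nat i then S1 else S0) else Blank)"

definition init_cfg :: "tm \<Rightarrow> config" where
  "init_cfg M = (0, replicate (2 + nwork M) 0, replicate (nwork M) (\<lambda>_. Blank))"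

definition read_syms :: "tm \<Rightarrow> bool list \<Rightarrow> bool list \<Rightarrow> config \<Rightarrow> sym list" where
  "read_syms M u x c = (case c of (q, pos, tps) \<Rightarrow>
     [tape_of u (pos ! 0), tape_of x (pos ! 1)] @
     map (\<lambda>j. (tps ! j) (pos ! (2 + j))) [0..<nwork M])"

text \<open>One step; None means the machine has halted (final state or no applicable rule).\<close>
definition step :: "tm \<Rightarrow> bool list \<Rightarrow> bool list \<Rightarrow> config \<Rightarrow> config option" where
  "step M u x c = (case c of (q, pos, tps) \<Rightarrow>
     if q = 1 \<or> q = 2 then None else
     (case find (\<lambda>(q0, rd, _). q0 = q \<and> rd = read_syms M u x c) (rules M) of
        None \<Rightarrow> None
      | Some (_, _, q', wr, mv) \<Rightarrow>
          Some (q', map2 (+) pos mv,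
                map (\<lambda>j. (tps ! j)(pos ! (2 + j) := wr ! j)) [0..<nwork M])))"

definition cfg_at :: "tm \<Rightarrow> bool list \<Rightarrow> bool list \<Rightarrow> nat \<Rightarrow> config" where
  "cfg_at M u x t = ((\<lambda>c. case step M u x c of None \<Rightarrow> c | Some c' \<Rightarrow> c') ^^ t) (init_cfg M)"

definition halts_at :: "tm \<Rightarrow> bool list \<Rightarrow> bool list \<Rightarrow> nat \<Rightarrow> bool" where
  "halts_at M u x t \<longleftrightarrow> step M u x (cfg_at M u x t) = None \<and>
     (\<forall>t' < t. step M u x (cfg_at M u x t') \<noteq> None)"

definition out_of :: "config \<Rightarrow> bool option" where
  "out_of c = (if fst c = 1 then Some True else if fst c = 2 then Some False else None)"

definition tm_out :: "tm \<Rightarrow> bool list \<Rightarrow> bool list \<Rightarrow> nat \<Rightarrow> bool option" where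
  "tm_out M u x t = out_of (cfg_at M u x t)"

section \<open>The time-bounded universal interpreter U^c\<close>

text \<open>A fixed prefix-free encoding E of machines (length at least 2 for every machine).\<close>
definition tm_encoding :: "(tm \<Rightarrow> bool list) \<Rightarrow> bool" where
  "tm_encoding E \<longleftrightarrow>
     (\<forall>M. wf_tm M \<longrightarrow> length (E M) \<ge> 2) \<and>
     (\<forall>M M' z. wf_tm M \<and> wf_tm M' \<and> E M' = E M @ z \<longrightarrow> M = M')"

text \<open>phi is (an implementation of) U^c w.r.t. the encoding E:
  (1) bot on programs not of the form E(T)u;
  (2) for p = E(T)u: the syntactic check finishes iff n is at least a threshold
      depending on p (bot before); afterwards the output is either 0 (budget of
      n^c own steps exhausted) or T's output after halting within n^c steps, and it
      is T's output whenever T halts within t steps with a_T (t+1) log(t+2) <= n^c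
      (Hennie-Stearns simulation overhead, constant depending on T only);
  (3) phi is computed by a 2-input-tape, 3-work-tape machine halting within
      beta n^c steps.\<close>
definition is_Uc :: "nat \<Rightarrow> (tm \<Rightarrow> bool list) \<Rightarrow> interp \<Rightarrow> bool" where
  "is_Uc c E \<phi> \<longleftrightarrow>
     (\<forall>p x. \<not> (\<exists>M u. wf_tm M \<and> p = E M @ u) \<longrightarrow> \<phi> p x = None) \<and>
     (\<forall>M. wf_tm M \<longrightarrow> (\<exists>a::real > 0. \<forall>u. \<exists>N. \<forall>x.
        (length x < N \<longrightarrow> \<phi> (E M @ u) x = None) \<and>
        (length x \<ge> N \<longrightarrow>
           (\<phi> (E M @ u) x = Some False \<or>
            (\<exists>t \<le> length x ^ c. halts_at M u x t \<and> \<phi> (E M @ u) x = tm_out M u x t)) \<and>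
           (\<forall>t. halts_at M u x t \<and> a * (real t + 1) * log 2 (real t + 2) \<le> real (length x ^ c)
                \<longrightarrow> \<phi> (E M @ u) x = tm_out M u x t)))) \<and>
     (\<exists>MU \<beta>. wf_tm MU \<and> nwork MU = 3 \<and>
        (\<forall>p x. length x \<ge> 1 \<longrightarrow>
           (\<exists>t. real t \<le> \<beta> * real (length x) ^ c \<and> halts_at MU p x t \<and> tm_out MU p x t = \<phi> p x)))"

section \<open>The circuit interpreter C\<close>

datatype vtx = VIn nat | VAnd nat nat | VOr nat nat | VNot nat

definition clog2 :: "nat \<Rightarrow> nat" where
  "clog2 n = (LEAST k. n \<le> 2 ^ k)"   \<comment> \<open>= ceiling(log2 n) for n >= 1\<close>

definition bits_to_nat :: "bool list \<Rightarrow> nat" where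
  "bits_to_nat bs = foldl (\<lambda>a b. 2 * a + (if b then 1 else 0)) 0 bs"

text \<open>Decoding of one vertex description: 2 label bits (00 input, 01 AND, 10 OR,
  11 NOT) followed by a w-bit field. Input index i in {1..n} is stored as i-1 in
  clog2 n bits; parents j in {1..s} are stored as j-1 in clog2 s bits each.
  Remaining field bits are ignored.\<close>
definition decode_vtx :: "nat \<Rightarrow> nat \<Rightarrow> bool list \<Rightarrow> vtx option" where
  "decode_vtx n s ch =
     (let fld = drop 2 ch; k = clog2 s;
          a = bits_to_nat (take k fld); b = bits_to_nat (take k (drop k fld));
          i = bits_to_nat (take (clog2 n) fld) in
      if \<not> ch ! 0 \<and> \<not> ch ! 1 then (if i < n then Some (VIn i) else None)
      else if \<not> ch ! 0 \<and> ch ! 1 then (if a < s \<and> b < s then Some (VAnd a b) else None)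
      else if ch ! 0 \<and> \<not> ch ! 1 then (if a < s \<and> b < s then Some (VOr a b) else None)
      else (if a < s then Some (VNot a) else None))"

fun parents :: "vtx \<Rightarrow> nat set" where
  "parents (VIn _) = {}"
| "parents (VAnd a b) = {a, b}"
| "parents (VOr a b) = {a, b}"
| "parents (VNot a) = {a}"

definition edges :: "vtx list \<Rightarrow> (nat \<times> nat) set" where
  "edges vs = {(a, v). v < length vs \<and> a \<in> parents (vs ! v)}"

definition sinks :: "vtx list \<Rightarrow> nat set" where
  "sinks vs = {v. v < length vs \<and> \<not> (\<exists>u < length vs. v \<in> parents (vs ! u))}"

definition wf_circ :: "vtx list \<Rightarrow> bool" where
  "wf_circ vs \<longleftrightarrow> vs \<noteq> [] \<and> acyclic (edges vs) \<and> card (sinks vs) = 1"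

fun ev :: "bool list \<Rightarrow> vtx list \<Rightarrow> nat \<Rightarrow> nat \<Rightarrow> bool" where
  "ev x vs 0 v = False"
| "ev x vs (Suc k) v = (case vs ! v of
      VIn i \<Rightarrow> x ! i
    | VAnd a b \<Rightarrow> ev x vs k a \<and> ev x vs k b
    | VOr a b \<Rightarrow> ev x vs k a \<or> ev x vs k b
    | VNot a \<Rightarrow> \<not> ev x vs k a)"

definition circ_eval :: "vtx list \<Rightarrow> bool list \<Rightarrow> bool" where
  "circ_eval vs x = ev x vs (length vs) (the_elem (sinks vs))"

text \<open>Program h = 0^k 1 [n-1 in k = clog2 n bits] 0^s 1 [vertex 1] ... [vertex s],
  each vertex using 2 + max(2 clog2 s, clog2 n) bits; total length L(s,n).\<close>
definition decode_circ :: "bool list \<Rightarrow> (nat \<times> vtx list) option" where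
  "decode_circ h =
     (let k = length (takeWhile Not h); r1 = drop (Suc k) h;
          n = bits_to_nat (take k r1) + 1; r2 = drop k r1;
          s = length (takeWhile Not r2); r3 = drop (Suc s) r2;
          w = max (2 * clog2 s) (clog2 n);
          chs = map (\<lambda>i. take (2 + w) (drop (i * (2 + w)) r3)) [0..<s];
          dvs = map (decode_vtx n s) chs in
      if length h > k \<and> length r1 \<ge> k \<and> clog2 n = k \<and> length r2 > s \<and>
         length r3 = s * (2 + w) \<and> None \<notin> set dvs \<and> wf_circ (map the dvs)
      then Some (n, map the dvs) else None)"

definition circuit_interp :: interp where
  "circuit_interp h x = (case decode_circ h of
      None \<Rightarrow> None
    | Some (n, vs) \<Rightarrow> if length x = n then Some (circ_eval vs x) else None)"

end

theory Submission
  imports Defs "HOL-Real_Asymp.Real_Asymp"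
begin

text \<open>The separating learning problem is the OR function on \<open>n\<close> bits under the distribution
  that puts mass \<open>1/2\<close> on the zero vector and \<open>1/(2n)\<close> on each unit vector.

  A fixed machine that scans its input for a 1 computes OR in linear time, so for large \<open>n\<close> it
  is a \<open>U\<^sup>c\<close>-program of constant length, and by Occam's razor MDL over \<open>U\<^sup>c\<close> needs a number
  of samples independent of \<open>n\<close>.

  On the circuit side, the OR of the inputs set in \<open>m\<close> samples is a consistent circuit with
  \<open>2m + 3\<close> vertices. The MDL circuit is not longer, hence reads at most \<open>2m + 3\<close> inputs, and it
  errs either on the zero vector or on every unit vector whose input it does not read. Its
  accuracy is therefore at most \<open>(n + 2m + 3)/(2n)\<close>, which forces \<open>m \<ge> ((1 - 2\<epsilon>) n - 3)/2\<close>.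
  The gain is thus even linear in \<open>n\<close>.\<close>

section \<open>Binary encoding of circuits\<close>

fun nat_to_bits :: "nat \<Rightarrow> nat \<Rightarrow> bool list" where
  "nat_to_bits 0 v = []"
| "nat_to_bits (Suc k) v = nat_to_bits k (v div 2) @ [odd v]"

lemma length_nat_to_bits [simp]: "length (nat_to_bits k v) = k"
  by (induction k arbitrary: v) auto

lemma bits_to_nat_snoc: "bits_to_nat (bs @ [b]) = 2 * bits_to_nat bs + (if b then 1 else 0)"
  by (simp add: bits_to_nat_def)

lemma bits_to_nat_nat_to_bits: "bits_to_nat (nat_to_bits k v) = v mod 2 ^ k"
proof (induction k arbitrary: v)
  case 0
  then show ?case by (simp add: bits_to_nat_def)
next
  case (Suc k)
  have "bits_to_nat (nat_to_bits (Suc k) v) = 2 * (v div 2 mod 2 ^ k) + v mod 2"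
    using Suc by (simp add: bits_to_nat_snoc odd_iff_mod_2_eq_one)
  also have "\<dots> = v mod 2 ^ Suc k"
    by (simp only: power_Suc mod_mult2_eq)
  finally show ?case .
qed

lemma le_two_power_clog2: "n \<le> 2 ^ clog2 n"
  unfolding clog2_def by (rule LeastI[of _ n]) (use less_exp[of n] in linarith)

lemma clog2_mono: "n \<le> m \<Longrightarrow> clog2 n \<le> clog2 m"
  unfolding clog2_def[of n] using le_two_power_clog2[of m] by (intro Least_le) linarith

lemma bits_to_nat_nat_to_bits_clog2: "v < n \<Longrightarrow> bits_to_nat (nat_to_bits (clog2 n) v) = v"
  using le_two_power_clog2[of n] by (simp add: bits_to_nat_nat_to_bits)

definition pad :: "nat \<Rightarrow> bool list \<Rightarrow> bool list" where
  "pad w bs = bs @ replicate (w - length bs) False"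

lemma length_pad: "length bs \<le> w \<Longrightarrow> length (pad w bs) = w"
  by (simp add: pad_def)

definition encode_vtx :: "nat \<Rightarrow> nat \<Rightarrow> nat \<Rightarrow> vtx \<Rightarrow> bool list" where
  "encode_vtx n s w v = (case v of
      VIn i \<Rightarrow> [False, False] @ pad w (nat_to_bits (clog2 n) i)
    | VAnd a b \<Rightarrow> [False, True] @ pad w (nat_to_bits (clog2 s) a @ nat_to_bits (clog2 s) b)
    | VOr a b \<Rightarrow> [True, False] @ pad w (nat_to_bits (clog2 s) a @ nat_to_bits (clog2 s) b)
    | VNot a \<Rightarrow> [True, True] @ pad w (nat_to_bits (clog2 s) a))"

lemma length_encode_vtx:
  "max (2 * clog2 s) (clog2 n) \<le> w \<Longrightarrow> length (encode_vtx n s w v) = 2 + w"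
  by (cases v) (auto simp: encode_vtx_def length_pad)

lemma decode_vtx_encode_vtx:
  assumes "\<forall>i. v = VIn i \<longrightarrow> i < n" and "\<forall>a\<in>parents v. a < s"
  shows "decode_vtx n s (encode_vtx n s w v) = Some v"
  using assms
  by (cases v) (auto simp: encode_vtx_def decode_vtx_def Let_def pad_def
                           bits_to_nat_nat_to_bits_clog2)

lemma decode_vtx_SomeD:
  "decode_vtx n s ch = Some v \<Longrightarrow> (\<forall>i. v = VIn i \<longrightarrow> i < n) \<and> (\<forall>a\<in>parents v. a < s)"
  unfolding decode_vtx_def Let_def by (auto split: if_splits)

definition circ_code_len :: "nat \<Rightarrow> nat \<Rightarrow> nat" where
  "circ_code_len s n = 2 * clog2 n + 2 + s * (3 + max (2 * clog2 s) (clog2 n))"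

lemma circ_code_len_strict_mono: "s' < s \<Longrightarrow> circ_code_len s' n < circ_code_len s n"
proof -
  assume "s' < s"
  then have "s' * (3 + max (2 * clog2 s') (clog2 n)) \<le> s' * (3 + max (2 * clog2 s) (clog2 n))"
    using clog2_mono[of s' s] by (intro mult_le_mono2) auto
  also have "\<dots> < s * (3 + max (2 * clog2 s) (clog2 n))"
    using \<open>s' < s\<close> by simp
  finally show ?thesis unfolding circ_code_len_def by simp
qed

lemma circ_code_len_le_iff: "circ_code_len s n \<le> circ_code_len s' n \<longleftrightarrow> s \<le> s'"
  by (metis circ_code_len_strict_mono le_less not_le)

lemma take_drop_concat_equal_length:
  assumes "\<forall>c\<in>set cs. length c = L" and "i < length cs"
  shows "take L (drop (i * L) (concat cs)) = cs ! i"
  using assms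
proof (induction cs arbitrary: i)
  case Nil
  then show ?case by simp
next
  case (Cons c cs)
  then show ?case
    by (cases i) (simp_all add: add.commute[of L])
qed

lemma chunks_concat:
  assumes "\<forall>c\<in>set cs. length c = L"
  shows "map (\<lambda>i. take L (drop (i * L) (concat cs))) [0..<length cs] = cs"
  using take_drop_concat_equal_length[OF assms] by (intro nth_equalityI) simp_all

lemma length_concat_equal_length:
  "\<forall>c\<in>set cs. length c = L \<Longrightarrow> length (concat cs) = length cs * L"
  by (induction cs) auto

lemma takeWhile_Not_replicate_False: "takeWhile Not (replicate k False @ True # r) = replicate k False"
  by (induction k) auto

definition encode_circ :: "nat \<Rightarrow> vtx list \<Rightarrow> bool list" where
  "encode_circ n vs = replicate (clog2 n) False @ True # nat_to_bits (clog2 n) (n - 1) @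
     replicate (length vs) False @ True #
     concat (map (encode_vtx n (length vs) (max (2 * clog2 (length vs)) (clog2 n))) vs)"

lemma decode_circ_encode_circ:
  assumes "n \<ge> 1" and "wf_circ vs"
    and "\<forall>v<length vs. \<forall>a\<in>parents (vs ! v). a < length vs"
    and "\<forall>v<length vs. \<forall>i. vs ! v = VIn i \<longrightarrow> i < n"
  shows "decode_circ (encode_circ n vs) = Some (n, vs)"
proof -
  define k where "k = clog2 n"
  define s where "s = length vs"
  define w where "w = max (2 * clog2 s) (clog2 n)"
  define cs where "cs = map (encode_vtx n s w) vs"
  define r2 where "r2 = replicate s False @ True # concat cs"
  define r1 where "r1 = nat_to_bits k (n - 1) @ r2"
  have h: "encode_circ n vs = replicate k False @ True # r1"
    by (simp add: encode_circ_def k_def s_def w_def cs_def r1_def r2_def)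
  have lc: "\<forall>c\<in>set cs. length c = 2 + w"
    using length_encode_vtx[of s n w] by (auto simp: cs_def w_def)
  have n: "bits_to_nat (take k r1) + 1 = n"
    using bits_to_nat_nat_to_bits_clog2[of "n - 1" n] assms(1) by (simp add: r1_def k_def)
  have chs: "map (\<lambda>i. take (2 + w) (drop (i * (2 + w)) (concat cs))) [0..<s] = cs"
    using chunks_concat[OF lc] by (simp add: cs_def s_def)
  have dvs: "map (decode_vtx n s) cs = map Some vs"
    using assms(3,4) by (auto simp: cs_def s_def in_set_conv_nth intro!: decode_vtx_encode_vtx)
  have "length (concat cs) = s * (2 + w)"
    using length_concat_equal_length[OF lc] by (simp add: cs_def s_def)
  moreover have "map the (map Some vs) = vs" "None \<notin> set (map Some vs)"
    by (induction vs) auto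
  moreover have "length (takeWhile Not (encode_circ n vs)) = k"
    "length (takeWhile Not r2) = s" "drop (Suc s) r2 = concat cs"
    "drop (Suc k) (encode_circ n vs) = r1" "drop k r1 = r2"
    "length (encode_circ n vs) > k" "length r1 \<ge> k" "length r2 > s"
    unfolding h r1_def r2_def by (simp_all add: takeWhile_Not_replicate_False)
  moreover have "max (2 * clog2 s) k = w"
    by (simp add: w_def k_def)
  ultimately show ?thesis
    using assms(2) unfolding decode_circ_def Let_def
    by (simp only: n chs dvs k_def[symmetric] simp_thms if_True refl)
qed

lemma decode_circ_SomeD:
  assumes "decode_circ h = Some (n, vs)"
  shows "length h = circ_code_len (length vs) n"
    and "\<forall>v<length vs. \<forall>a\<in>parents (vs ! v). a < length vs"
    and "\<forall>v<length vs. \<forall>i. vs ! v = VIn i \<longrightarrow> i < n"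
    and "wf_circ vs"
proof -
  define k where "k = length (takeWhile Not h)"
  define r1 where "r1 = drop (Suc k) h"
  define n' where "n' = bits_to_nat (take k r1) + 1"
  define r2 where "r2 = drop k r1"
  define s where "s = length (takeWhile Not r2)"
  define r3 where "r3 = drop (Suc s) r2"
  define w where "w = max (2 * clog2 s) (clog2 n')"
  define chs where "chs = map (\<lambda>i. take (2 + w) (drop (i * (2 + w)) r3)) [0..<s]"
  define dvs where "dvs = map (decode_vtx n' s) chs"
  have checks: "length h > k \<and> length r1 \<ge> k \<and> clog2 n' = k \<and> length r2 > s \<and>
         length r3 = s * (2 + w) \<and> None \<notin> set dvs \<and> wf_circ (map the dvs)"
   and result: "n = n'" "vs = map the dvs"
    using assms unfolding decode_circ_def Let_def
    by (simp_all only: k_def[symmetric] r1_def[symmetric] n'_def[symmetric] r2_def[symmetric]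
      s_def[symmetric] r3_def[symmetric] w_def[symmetric] chs_def[symmetric] dvs_def[symmetric]
      split: if_splits) auto
  have s: "length vs = s"
    using result by (simp add: dvs_def chs_def)
  show "wf_circ vs"
    using checks result by simp
  have "length h = 2 * k + 2 + s + length r3"
    using checks by (simp add: r1_def r2_def r3_def) linarith
  then show "length h = circ_code_len (length vs) n"
    using checks result s by (simp add: circ_code_len_def w_def algebra_simps)
  have decoded: "decode_vtx n s (chs ! v) = Some (vs ! v)" if "v < length vs" for v
  proof -
    have v: "v < length dvs"
      using that result by simp
    then have "dvs ! v \<noteq> None"
      using checks nth_mem by metis
    then show ?thesis
      using v result by (auto simp: dvs_def)
  qed
  show "\<forall>v<length vs. \<forall>a\<in>parents (vs ! v). a < length vs"
    using decoded decode_vtx_SomeD s by blast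
  show "\<forall>v<length vs. \<forall>i. vs ! v = VIn i \<longrightarrow> i < n"
    using decoded decode_vtx_SomeD by blast
qed

lemma ev_cong_inputs:
  assumes "\<forall>v<length vs. \<forall>a\<in>parents (vs ! v). a < length vs"
    and "\<forall>v<length vs. \<forall>i. vs ! v = VIn i \<longrightarrow> x ! i = y ! i"
    and "v < length vs"
  shows "ev x vs k v = ev y vs k v"
  using assms(3)
proof (induction k arbitrary: v)
  case 0
  then show ?case by simp
next
  case (Suc k)
  show ?case
  proof (cases "vs ! v")
    case (VIn i)
    then show ?thesis using assms(2) Suc by simp
  next
    case (VAnd a b)
    then show ?thesis using assms(1) Suc by fastforce
  next
    case (VOr a b)
    then show ?thesis using assms(1) Suc by fastforce
  next
    case (VNot a)
    then show ?thesis using assms(1) Suc by fastforce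
  qed
qed

lemma the_elem_sinks_less: "wf_circ vs \<Longrightarrow> the_elem (sinks vs) < length vs"
proof -
  assume "wf_circ vs"
  then obtain z where "sinks vs = {z}"
    by (auto simp: wf_circ_def card_Suc_eq)
  then show ?thesis
    by (auto simp: sinks_def)
qed

lemma circ_eval_cong_inputs:
  assumes "wf_circ vs" and "\<forall>v<length vs. \<forall>a\<in>parents (vs ! v). a < length vs"
    and "\<forall>v<length vs. \<forall>i. vs ! v = VIn i \<longrightarrow> x ! i = y ! i"
  shows "circ_eval vs x = circ_eval vs y"
  unfolding circ_eval_def using ev_cong_inputs[OF assms(2,3) the_elem_sinks_less[OF assms(1)]] .

text \<open>Vertex 2 is the constant false \<open>x\<^sub>0 \<and> \<not> x\<^sub>0\<close>; vertex \<open>2j + 3\<close> reads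
  input \<open>is ! j\<close> and vertex \<open>2j + 4\<close> is the disjunction of vertices \<open>2j + 2\<close> and \<open>2j + 3\<close>.\<close>
definition or_vertex :: "nat list \<Rightarrow> nat \<Rightarrow> vtx" where
  "or_vertex is v =
     (if v = 0 then VIn 0 else if v = 1 then VNot 0 else if v = 2 then VAnd 0 1
      else if odd v then VIn (is ! ((v - 3) div 2)) else VOr (v - 2) (v - 1))"

definition or_circuit :: "nat list \<Rightarrow> vtx list" where
  "or_circuit is = map (or_vertex is) [0..<3 + 2 * length is]"

lemma length_or_circuit [simp]: "length (or_circuit is) = 3 + 2 * length is"
  by (simp add: or_circuit_def)

lemma nth_or_circuit: "v < 3 + 2 * length is \<Longrightarrow> or_circuit is ! v = or_vertex is v"
  by (simp add: or_circuit_def del: upt_Suc)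

lemma parents_or_circuit_less:
  "v < length (or_circuit is) \<Longrightarrow> a \<in> parents (or_circuit is ! v) \<Longrightarrow> a < v"
  by (auto simp: nth_or_circuit or_vertex_def split: if_splits)

lemma or_circuit_VIn:
  assumes "v < length (or_circuit is)" and "or_circuit is ! v = VIn i"
  shows "i = 0 \<or> i \<in> set is"
proof (cases "v = 0")
  case False
  then have "odd v" "v \<ge> 3" "i = is ! ((v - 3) div 2)"
    using assms by (auto simp: nth_or_circuit or_vertex_def split: if_splits)
  moreover have "(v - 3) div 2 < length is"
    using assms(1) \<open>v \<ge> 3\<close> by simp
  ultimately show ?thesis by simp
qed (use assms in \<open>simp add: nth_or_circuit or_vertex_def\<close>)

lemma sinks_or_circuit: "sinks (or_circuit is) = {2 + 2 * length is}"
proof (intro set_eqI iffI)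
  fix v assume v: "v \<in> sinks (or_circuit is)"
  then have vl: "v < 3 + 2 * length is"
    and not_parent: "\<And>u. u < 3 + 2 * length is \<Longrightarrow> v \<notin> parents (or_circuit is ! u)"
    by (auto simp: sinks_def)
  show "v \<in> {2 + 2 * length is}"
  proof (rule ccontr)
    assume "v \<notin> {2 + 2 * length is}"
    then have v2: "v < 2 + 2 * length is"
      using vl by simp
    have "v = 0 \<or> v = 1 \<or> (v \<ge> 2 \<and> even v) \<or> (v \<ge> 3 \<and> odd v)"
      by presburger
    then consider "v = 0" | "v = 1" | "v \<ge> 2" "even v" | "v \<ge> 3" "odd v"
      by blast
    then show False
    proof cases
      case 3
      then have "v + 2 < 3 + 2 * length is"
        using v2 by presburger
      then show False
        using 3 not_parent[of "v + 2"] by (simp add: nth_or_circuit or_vertex_def)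
    qed (use not_parent[of 1] not_parent[of 2] not_parent[of "v + 1"] v2 in \<open>simp_all add: nth_or_circuit or_vertex_def\<close>)
  qed
qed (use parents_or_circuit_less in \<open>fastforce simp: sinks_def\<close>)

lemma wf_or_circuit: "wf_circ (or_circuit is)"
proof -
  have "edges (or_circuit is) \<subseteq> less_than"
    using parents_or_circuit_less by (auto simp: edges_def)
  then have "acyclic (edges (or_circuit is))"
    using acyclic_subset wf_acyclic wf_less_than by blast
  moreover have "or_circuit is \<noteq> []"
    by (simp add: or_circuit_def)
  ultimately show ?thesis
    by (simp add: wf_circ_def sinks_or_circuit)
qed

lemma ev_or_circuit:
  "j \<le> length is \<Longrightarrow> 2 + 2 * j < k \<Longrightarrow>
   ev x (or_circuit is) k (2 + 2 * j) = (\<exists>j'<j. x ! (is ! j'))"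
proof (induction j arbitrary: k)
  case 0
  then have k: "k = Suc (Suc (Suc (k - 3)))"
    by simp
  show ?case
    by (subst k) (simp add: nth_or_circuit or_vertex_def)
next
  case (Suc j)
  then obtain k' where k: "k = Suc k'" and k': "2 + 2 * j < k'"
    by (cases k) auto
  then obtain k'' where k'': "k' = Suc k''"
    by (cases k') auto
  have o1: "or_circuit is ! (2 + 2 * Suc j) = VOr (2 + 2 * j) (3 + 2 * j)"
    and o2: "or_circuit is ! (3 + 2 * j) = VIn (is ! j)"
    using Suc.prems by (simp_all add: nth_or_circuit or_vertex_def)
  have "ev x (or_circuit is) k (2 + 2 * Suc j)
      = (ev x (or_circuit is) k' (2 + 2 * j) \<or> ev x (or_circuit is) k' (3 + 2 * j))"
    unfolding k by (simp only: ev.simps o1 vtx.case)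
  also have "ev x (or_circuit is) k' (3 + 2 * j) = x ! (is ! j)"
    unfolding k'' by (simp add: o2)
  also have "ev x (or_circuit is) k' (2 + 2 * j) = (\<exists>j'<j. x ! (is ! j'))"
    using Suc k' by simp
  finally show ?case
    using less_Suc_eq by auto
qed

lemma circ_eval_or_circuit: "circ_eval (or_circuit is) x = (\<exists>j<length is. x ! (is ! j))"
  unfolding circ_eval_def sinks_or_circuit
  using ev_or_circuit[of "length is" "is" "3 + 2 * length is" x] by simp

section \<open>Simulation of linear-time machines by \<open>U\<^sup>c\<close>\<close>

lemma eventually_nlogn_le_power:
  fixes a :: real and c :: nat
  assumes "a > 0" and "c > 1"
  shows "\<forall>\<^sub>F n in sequentially. a * (real n + 2) * log 2 (real n + 3) \<le> real n ^ c"
proof -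
  have "((\<lambda>n::nat. (real n + 2) * log 2 (real n + 3) / real n ^ 2) \<longlongrightarrow> 0) sequentially"
    by real_asymp
  from order_tendstoD(2)[OF this, of "1 / a"]
  have "\<forall>\<^sub>F n in sequentially. (real n + 2) * log 2 (real n + 3) / real n ^ 2 < 1 / a"
    using assms(1) by simp
  moreover have "\<forall>\<^sub>F n in sequentially. n \<ge> (1::nat)"
    by (rule eventually_ge_at_top)
  ultimately show ?thesis
  proof eventually_elim
    case (elim n)
    then have "a * ((real n + 2) * log 2 (real n + 3)) < real n ^ 2"
      using assms(1) by (simp add: divide_less_eq field_simps)
    also have "real n ^ 2 \<le> real n ^ c"
      using elim(2) assms(2) by (intro power_increasing) auto
    finally show ?case
      by (simp add: mult.assoc)
  qed
qed

text \<open>For a running time \<open>t \<le> n + 1\<close> the simulation overhead \<open>a (t + 1) log (t + 2)\<close> is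
  eventually below the budget \<open>n\<^sup>c\<close>, since \<open>c > 1\<close>.\<close>
lemma is_Uc_computes_linear_time:
  assumes U: "is_Uc c E U" and "c > 1" and "wf_tm M"
    and halts: "\<And>x. halts_at M u x (T x)" and time: "\<And>x. T x \<le> length x + 1"
    and out: "\<And>x. tm_out M u x (T x) = Some (g x)"
  shows "\<exists>N. \<forall>x. N \<le> length x \<longrightarrow> U (E M @ u) x = Some (g x)"
proof -
  obtain a :: real where "a > 0" and "\<exists>N. \<forall>x. length x \<ge> N \<longrightarrow>
      (\<forall>t. halts_at M u x t \<and> a * (real t + 1) * log 2 (real t + 2) \<le> real (length x ^ c)
           \<longrightarrow> U (E M @ u) x = tm_out M u x t)"
    using U \<open>wf_tm M\<close> unfolding is_Uc_def by meson
  then obtain N1 where N1: "\<And>x t. N1 \<le> length x \<Longrightarrow> halts_at M u x t \<Longrightarrow>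
      a * (real t + 1) * log 2 (real t + 2) \<le> real (length x ^ c) \<Longrightarrow> U (E M @ u) x = tm_out M u x t"
    by blast
  obtain N2 where N2: "\<And>n. N2 \<le> n \<Longrightarrow> a * (real n + 2) * log 2 (real n + 3) \<le> real n ^ c"
    using eventually_nlogn_le_power[OF \<open>a > 0\<close> \<open>c > 1\<close>] unfolding eventually_sequentially by blast
  have "U (E M @ u) x = Some (g x)" if "max N1 N2 \<le> length x" for x
  proof -
    have "real (T x) + 1 \<le> real (length x) + 2" "log 2 (real (T x) + 2) \<le> log 2 (real (length x) + 3)"
      using time[of x] by simp_all
    then have "a * (real (T x) + 1) * log 2 (real (T x) + 2)
        \<le> a * (real (length x) + 2) * log 2 (real (length x) + 3)"
      using \<open>a > 0\<close> by (intro mult_mono) auto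
    also have "\<dots> \<le> real (length x ^ c)"
      using N2 that by simp
    finally show ?thesis
      using N1[OF _ halts] out that by simp
  qed
  then show ?thesis
    by blast
qed

definition or_fun :: "bool list \<Rightarrow> bool" where
  "or_fun x \<longleftrightarrow> True \<in> set x"

definition first_true :: "bool list \<Rightarrow> nat" where
  "first_true x = length (takeWhile Not x)"

lemma first_true_le_length: "first_true x \<le> length x"
  by (simp add: first_true_def length_takeWhile_le)

lemma nth_less_first_true: "t < first_true x \<Longrightarrow> t < length x \<and> \<not> x ! t"
  unfolding first_true_def
  by (induction x arbitrary: t) (auto simp: nth_Cons split: nat.splits if_splits)

lemma nth_first_true: "first_true x < length x \<Longrightarrow> x ! first_true x"
  unfolding first_true_def using nth_length_takeWhile by fastforce

lemma first_true_less_length_iff: "first_true x < length x \<longleftrightarrow> or_fun x"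
  unfolding first_true_def or_fun_def by (induction x) auto

text \<open>Scans the input tape until the first 1 (accept) or the first blank (reject).\<close>
definition scan_tm :: tm where
  "scan_tm = TM 0
     [(0, [Blank, S0], 0, [], [0, 1]), (0, [Blank, S1], 1, [], [0, 0]), (0, [Blank, Blank], 2, [], [0, 0])]"

lemma wf_scan_tm: "wf_tm scan_tm"
  by (simp add: wf_tm_def scan_tm_def)

lemma cfg_at_Suc:
  "cfg_at M u x (Suc t) = (case step M u x (cfg_at M u x t) of None \<Rightarrow> cfg_at M u x t | Some c' \<Rightarrow> c')"
  unfolding cfg_at_def by simp

lemma step_scan_tm_moving:
  "t < first_true x \<Longrightarrow> step scan_tm [] x (0, [0, int t], []) = Some (0, [0, int (Suc t)], [])"
  using nth_less_first_true[of t x] by (simp add: step_def scan_tm_def read_syms_def tape_of_def)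

lemma step_scan_tm_stopping:
  "step scan_tm [] x (0, [0, int (first_true x)], [])
     = Some (if or_fun x then 1 else 2, [0, int (first_true x)], [])"
  using nth_first_true[of x] first_true_less_length_iff[of x] first_true_le_length[of x]
  by (simp add: step_def scan_tm_def read_syms_def tape_of_def)

lemma cfg_at_scan_tm: "t \<le> first_true x \<Longrightarrow> cfg_at scan_tm [] x t = (0, [0, int t], [])"
proof (induction t)
  case 0
  then show ?case by (simp add: cfg_at_def init_cfg_def scan_tm_def numeral_2_eq_2)
next
  case (Suc t)
  then show ?case using step_scan_tm_moving[of t x] by (simp add: cfg_at_Suc)
qed

lemma cfg_at_scan_tm_final:
  "cfg_at scan_tm [] x (Suc (first_true x)) = (if or_fun x then 1 else 2, [0, int (first_true x)], [])"
  using cfg_at_scan_tm[of "first_true x" x] step_scan_tm_stopping[of x] by (simp add: cfg_at_Suc)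

lemma halts_at_scan_tm: "halts_at scan_tm [] x (Suc (first_true x))"
  unfolding halts_at_def
proof (intro conjI allI impI)
  show "step scan_tm [] x (cfg_at scan_tm [] x (Suc (first_true x))) = None"
    unfolding cfg_at_scan_tm_final by (simp add: step_def)
  fix t assume "t < Suc (first_true x)"
  then consider "t < first_true x" | "t = first_true x"
    by linarith
  then show "step scan_tm [] x (cfg_at scan_tm [] x t) \<noteq> None"
    using cfg_at_scan_tm[of t x] step_scan_tm_moving[of t x] step_scan_tm_stopping[of x]
    by cases simp_all
qed

lemma tm_out_scan_tm: "tm_out scan_tm [] x (Suc (first_true x)) = Some (or_fun x)"
  unfolding tm_out_def cfg_at_scan_tm_final by (simp add: out_of_def)

lemma is_Uc_computes_or:
  assumes "is_Uc c E U" and "c > 1"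
  shows "\<exists>N. \<forall>x. N \<le> length x \<longrightarrow> U (E scan_tm) x = Some (or_fun x)"
  using is_Uc_computes_linear_time[OF assms wf_scan_tm halts_at_scan_tm _ tm_out_scan_tm]
    first_true_le_length by simp

section \<open>Minimum description length learning\<close>

lemma mdl_cands_nonempty: "consistent \<phi> n D h \<Longrightarrow> mdl_cands \<phi> n D \<noteq> {}"
  using ex_has_least_nat[of "consistent \<phi> n D" h length] unfolding mdl_cands_def by blast

lemma MDL_of_consistent:
  assumes "valid_tb tb" and "consistent \<phi> n D h"
  defines "h' \<equiv> tb D (mdl_cands \<phi> n D)"
  shows "MDL \<phi> tb n D = Some (\<lambda>x. the (\<phi> h' x))"
    and "consistent \<phi> n D h'"
    and "length h' \<le> length h"
proof -
  have "mdl_cands \<phi> n D \<noteq> {}"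
    using mdl_cands_nonempty[OF assms(2)] .
  then show "MDL \<phi> tb n D = Some (\<lambda>x. the (\<phi> h' x))"
    by (simp add: MDL_def h'_def)
  have "h' \<in> mdl_cands \<phi> n D"
    using assms(1) \<open>mdl_cands \<phi> n D \<noteq> {}\<close> by (simp add: valid_tb_def h'_def)
  then show "consistent \<phi> n D h'" and "length h' \<le> length h"
    using assms(2) by (auto simp: mdl_cands_def)
qed

lemma set_mk_dataset: "set (mk_dataset f m xs) = (\<lambda>j. (xs j, f (xs j))) ` {..<m}"
  by (auto simp: mk_dataset_def)

lemma set_pmf_samples: "xs \<in> set_pmf (samples P m) \<Longrightarrow> j < m \<Longrightarrow> xs j \<in> set_pmf P"
  unfolding samples_def by (simp add: set_Pi_pmf PiE_dflt_def)

lemma finite_bool_lists_length_le: "finite {h :: bool list. length h \<le> L}"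
  using finite_lists_length_le[of "UNIV :: bool set" L] by simp

text \<open>Occam's razor: the MDL hypothesis is no longer than the target program, so MDL can only
  fail if one of the finitely many short programs of accuracy below \<open>1 - \<epsilon>\<close> is consistent
  with all \<open>m\<close> samples.\<close>
lemma mdl_failure_prob_le:
  fixes \<epsilon> :: real
  assumes hp: "\<forall>x. length x = n \<longrightarrow> \<phi> hp x = Some (f x)"
    and supp: "set_pmf P \<subseteq> {x. length x = n}" and tb: "valid_tb tb" and "\<epsilon> < 1"
  shows "measure_pmf.prob (samples P m) {xs. \<not> mdl_success \<phi> tb n f P \<epsilon> (mk_dataset f m xs)}
           \<le> card {h :: bool list. length h \<le> length hp} * (1 - \<epsilon>) ^ m"
proof -
  define F where "F = {xs. \<not> mdl_success \<phi> tb n f P \<epsilon> (mk_dataset f m xs)}"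
  define B where "B = {h. length h \<le> length hp \<and> acc P f (\<lambda>x. the (\<phi> h x)) < 1 - \<epsilon>}"
  define A where "A h = {x. the (\<phi> h x) = f x}" for h
  have "finite B"
    by (rule finite_subset[OF _ finite_bool_lists_length_le[of "length hp"]]) (auto simp: B_def)
  have "F \<inter> set_pmf (samples P m) \<subseteq> (\<Union>h\<in>B. Pi {..<m} (\<lambda>_. A h))"
  proof
    fix xs assume xs: "xs \<in> F \<inter> set_pmf (samples P m)"
    define D where "D = mk_dataset f m xs"
    have "consistent \<phi> n D hp"
      using hp xs supp set_pmf_samples by (fastforce simp: consistent_def D_def set_mk_dataset)
    note MDL = MDL_of_consistent[OF tb this]
    define h where "h = tb D (mdl_cands \<phi> n D)"
    have "h \<in> B"
      using xs MDL(1,3) by (simp add: F_def mdl_success_def B_def D_def h_def)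
    moreover have "xs j \<in> A h" if "j < m" for j
      using MDL(2) that by (force simp: consistent_def D_def set_mk_dataset A_def h_def)
    ultimately show "xs \<in> (\<Union>h\<in>B. Pi {..<m} (\<lambda>_. A h))"
      by blast
  qed
  then have "measure_pmf.prob (samples P m) F
      \<le> measure_pmf.prob (samples P m) (\<Union>h\<in>B. Pi {..<m} (\<lambda>_. A h))"
    by (subst measure_Int_set_pmf[symmetric]) (rule measure_pmf.finite_measure_mono, simp_all)
  also have "\<dots> \<le> (\<Sum>h\<in>B. measure_pmf.prob (samples P m) (Pi {..<m} (\<lambda>_. A h)))"
    by (rule measure_pmf.finite_measure_subadditive_finite[OF \<open>finite B\<close>]) simp
  also have "\<dots> = (\<Sum>h\<in>B. measure_pmf.prob P (A h) ^ m)"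
    by (simp add: samples_def measure_Pi_pmf_Pi)
  also have "\<dots> \<le> (\<Sum>h\<in>B. (1 - \<epsilon>) ^ m)"
    by (intro sum_mono power_mono) (auto simp: B_def acc_def A_def)
  also have "\<dots> \<le> card {h :: bool list. length h \<le> length hp} * (1 - \<epsilon>) ^ m"
    using \<open>\<epsilon> < 1\<close> by (auto simp: B_def intro!: mult_right_mono card_mono finite_bool_lists_length_le)
  finally show ?thesis
    unfolding F_def .
qed

lemma occam_sample_size:
  fixes \<epsilon> \<delta> :: real and \<phi> :: interp and hp :: "bool list"
  assumes "0 < \<epsilon>" "\<epsilon> < 1" "0 < \<delta>" and tb: "valid_tb tb"
  obtains m where "m \<ge> 1"
    and "\<And>n P. \<forall>x. length x = n \<longrightarrow> \<phi> hp x = Some (f x) \<Longrightarrow> set_pmf P \<subseteq> {x. length x = n} \<Longrightarrow>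
           mdl_pac \<phi> tb n f P \<epsilon> \<delta> m"
proof -
  define C where "C = real (card {h :: bool list. length h \<le> length hp})"
  have "(\<lambda>m. C * (1 - \<epsilon>) ^ m) \<longlonglongrightarrow> C * 0"
    using assms by (intro tendsto_mult tendsto_const LIMSEQ_power_zero) auto
  then have "\<forall>\<^sub>F m in sequentially. C * (1 - \<epsilon>) ^ m < \<delta> \<and> m \<ge> 1"
    using assms(3) by (intro eventually_conj order_tendstoD(2) eventually_ge_at_top) auto
  then obtain m where m: "m \<ge> 1" "\<And>m'. m' \<ge> m \<Longrightarrow> C * (1 - \<epsilon>) ^ m' \<le> \<delta>"
    unfolding eventually_sequentially by (meson less_imp_le order_refl)
  show ?thesis
  proof (rule that[OF m(1)])
    fix n and P :: "bool list pmf"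
    assume hp: "\<forall>x. length x = n \<longrightarrow> \<phi> hp x = Some (f x)" and supp: "set_pmf P \<subseteq> {x. length x = n}"
    show "mdl_pac \<phi> tb n f P \<epsilon> \<delta> m"
      unfolding mdl_pac_def
    proof (intro allI impI)
      fix m' assume "m \<le> m'"
      let ?S = "{xs. mdl_success \<phi> tb n f P \<epsilon> (mk_dataset f m' xs)}"
      have "measure_pmf.prob (samples P m') (UNIV - ?S) \<le> C * (1 - \<epsilon>) ^ m'"
        using mdl_failure_prob_le[where \<phi> = \<phi> and hp = hp and f = f, OF hp supp tb \<open>\<epsilon> < 1\<close>]
        by (simp add: set_diff_eq C_def)
      also have "\<dots> \<le> \<delta>"
        using m(2) \<open>m \<le> m'\<close> .
      finally show "measure_pmf.prob (samples P m') ?S \<ge> 1 - \<delta>"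
        using measure_pmf.prob_compl[of ?S "samples P m'"] by simp
    qed
  qed
qed

lemma sample_cx_le:
  assumes "m \<ge> 1" and "mdl_pac \<phi> tb n f P \<epsilon> \<delta> m"
  obtains u where "sample_cx \<phi> tb n f P \<epsilon> \<delta> = enat u" and "1 \<le> u" and "u \<le> m"
proof -
  define u where "u = (LEAST m. m \<ge> 1 \<and> mdl_pac \<phi> tb n f P \<epsilon> \<delta> m)"
  have "sample_cx \<phi> tb n f P \<epsilon> \<delta> = enat u"
    using assms by (auto simp: sample_cx_def u_def)
  moreover have "1 \<le> u"
    unfolding u_def by (rule LeastI2[of _ m]) (use assms in auto)
  moreover have "u \<le> m"
    unfolding u_def by (rule Least_le) (use assms in auto)
  ultimately show ?thesis
    using that by blast
qed

lemma sample_cx_ge: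
  assumes "\<And>m. m \<ge> 1 \<Longrightarrow> mdl_pac \<phi> tb n f P \<epsilon> \<delta> m \<Longrightarrow> B \<le> real m"
  shows "ereal B \<le> ereal_of_enat (sample_cx \<phi> tb n f P \<epsilon> \<delta>)"
proof (cases "\<exists>m\<ge>1. mdl_pac \<phi> tb n f P \<epsilon> \<delta> m")
  case True
  define u where "u = (LEAST m. m \<ge> 1 \<and> mdl_pac \<phi> tb n f P \<epsilon> \<delta> m)"
  have "u \<ge> 1 \<and> mdl_pac \<phi> tb n f P \<epsilon> \<delta> u"
    unfolding u_def using True by (rule LeastI_ex)
  moreover have "sample_cx \<phi> tb n f P \<epsilon> \<delta> = enat u"
    using True by (simp add: sample_cx_def u_def)
  ultimately show ?thesis
    using assms by simp
qed (auto simp: sample_cx_def)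

lemma desc_len_le:
  "\<forall>x. length x = n \<longrightarrow> \<phi> h x = Some (f x) \<Longrightarrow> desc_len \<phi> n f \<le> enat (length h)"
  unfolding desc_len_def by (rule INF_lower2[of h]) auto

lemma sample_cx_ratio_le_gain:
  assumes "set_pmf P \<subseteq> {x. length x = n}" and "desc_len \<phi> n f \<le> enat (n ^ d)"
  shows "ereal_of_enat (sample_cx \<psi> tb\<psi> n f P \<epsilon> \<delta>) / ereal_of_enat (sample_cx \<phi> tb\<phi> n f P \<epsilon> \<delta>)
           \<le> gain \<phi> tb\<phi> \<psi> tb\<psi> \<epsilon> \<delta> n d"
  unfolding gain_def by (rule SUP_upper2[of "(f, P)"]) (use assms in auto)

lemma ereal_divide_ge:
  fixes X :: ereal and a b B :: real
  assumes "ereal a \<le> X" and "0 \<le> a" and "0 < b" and "b \<le> B"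
  shows "ereal (a / B) \<le> X / ereal b"
proof (cases X)
  case (real x)
  have "a / B \<le> a / b"
    using assms(2-4) by (intro divide_left_mono) auto
  also have "\<dots> \<le> x / b"
    using assms(1,3) real by (intro divide_right_mono) auto
  finally show ?thesis
    using real assms(3) by simp
qed (use assms in auto)

section \<open>A hard distribution for circuits\<close>

lemma decode_circ_encode_or_circuit:
  assumes "n \<ge> 1" and "\<forall>i\<in>set is. i < n"
  shows "decode_circ (encode_circ n (or_circuit is)) = Some (n, or_circuit is)"
proof (rule decode_circ_encode_circ[OF assms(1) wf_or_circuit])
  show "\<forall>v<length (or_circuit is). \<forall>a\<in>parents (or_circuit is ! v). a < length (or_circuit is)"
    using parents_or_circuit_less by fastforce
  show "\<forall>v<length (or_circuit is). \<forall>i. or_circuit is ! v = VIn i \<longrightarrow> i < n"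
    using or_circuit_VIn assms by fastforce
qed

text \<open>The OR of the positions of the first 1 in the positive samples is consistent.\<close>
lemma exists_consistent_or_circuit:
  assumes "n \<ge> 1" and len: "\<forall>j<m. length (xs j) = n"
  shows "\<exists>h. consistent circuit_interp n (mk_dataset or_fun m xs) h \<and>
             length h = circ_code_len (3 + 2 * m) n"
proof -
  define "is" where "is = map (\<lambda>j. if or_fun (xs j) then first_true (xs j) else 0) [0..<m]"
  define h where "h = encode_circ n (or_circuit is)"
  have is_less: "is ! j < n" if "j < m" for j
    using that assms first_true_less_length_iff[of "xs j"] by (simp add: is_def)
  moreover have "length is = m"
    by (simp add: is_def)
  ultimately have dec: "decode_circ h = Some (n, or_circuit is)"
    unfolding h_def using assms(1) by (intro decode_circ_encode_or_circuit) (auto simp: in_set_conv_nth)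
  have "(\<exists>j'<m. xs j ! (is ! j')) = or_fun (xs j)" if "j < m" for j
  proof
    assume "\<exists>j'<m. xs j ! (is ! j')"
    then obtain j' where "j' < m" "xs j ! (is ! j')"
      by blast
    moreover have "xs j ! (is ! j') \<in> set (xs j)"
      using is_less[OF \<open>j' < m\<close>] len that by simp
    ultimately show "or_fun (xs j)"
      unfolding or_fun_def by simp
  next
    assume "or_fun (xs j)"
    then have "xs j ! (is ! j)"
      using that nth_first_true first_true_less_length_iff by (simp add: is_def)
    then show "\<exists>j'<m. xs j ! (is ! j')"
      using that by blast
  qed
  then have "consistent circuit_interp n (mk_dataset or_fun m xs) h"
    using len dec \<open>length is = m\<close>
    by (auto simp: consistent_def set_mk_dataset circuit_interp_def circ_eval_or_circuit)
  moreover have "length h = circ_code_len (3 + 2 * m) n"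
    using decode_circ_SomeD(1)[OF dec] \<open>length is = m\<close> by simp
  ultimately show ?thesis
    by blast
qed

definition circ_inputs :: "vtx list \<Rightarrow> nat set" where
  "circ_inputs vs = {i. \<exists>v<length vs. vs ! v = VIn i}"

lemma card_circ_inputs_le: "finite (circ_inputs vs) \<and> card (circ_inputs vs) \<le> length vs"
proof -
  define input_of where "input_of v = (case vs ! v of VIn i \<Rightarrow> i | _ \<Rightarrow> 0)" for v
  have sub: "circ_inputs vs \<subseteq> input_of ` {..<length vs}"
    unfolding circ_inputs_def input_of_def by force
  then have "card (circ_inputs vs) \<le> card (input_of ` {..<length vs})"
    by (intro card_mono) auto
  also have "\<dots> \<le> length vs"
    using card_image_le[of "{..<length vs}" input_of] by simp
  finally show ?thesis
    using finite_subset[OF sub] by blast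
qed

definition unit_vec :: "nat \<Rightarrow> nat \<Rightarrow> bool list" where
  "unit_vec n i = (replicate n False)[i := True]"

lemma length_unit_vec [simp]: "length (unit_vec n i) = n"
  by (simp add: unit_vec_def)

lemma nth_unit_vec: "i < n \<Longrightarrow> k < n \<Longrightarrow> unit_vec n i ! k = (k = i)"
  by (simp add: unit_vec_def nth_list_update)

lemma or_fun_unit_vec: "i < n \<Longrightarrow> or_fun (unit_vec n i)"
  by (simp add: or_fun_def unit_vec_def set_update_memI)

lemma or_fun_replicate_False: "\<not> or_fun (replicate n False)"
  by (simp add: or_fun_def)

lemma circ_eval_unit_vec_unread:
  assumes dec: "decode_circ h = Some (n, vs)" and "i < n" and "i \<notin> circ_inputs vs"
  shows "circ_eval vs (unit_vec n i) = circ_eval vs (replicate n False)"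
proof -
  note circ = decode_circ_SomeD[OF dec]
  have "unit_vec n i ! k = replicate n False ! k" if "v < length vs" "vs ! v = VIn k" for v k
  proof -
    have "k < n" "k \<noteq> i"
      using circ(3) assms(3) that unfolding circ_inputs_def by blast+
    then show ?thesis
      using assms(2) by (simp add: nth_unit_vec)
  qed
  then show ?thesis
    using circ_eval_cong_inputs[OF circ(4,2)] by blast
qed

definition or_point :: "nat \<Rightarrow> nat \<Rightarrow> bool list" where
  "or_point n j = (if j < n then unit_vec n j else replicate n False)"

definition or_dist :: "nat \<Rightarrow> bool list pmf" where
  "or_dist n = map_pmf (or_point n) (pmf_of_set {..<2 * n})"

lemma set_pmf_or_dist: "n \<ge> 1 \<Longrightarrow> set_pmf (or_dist n) = or_point n ` {..<2 * n}"
  by (simp add: or_dist_def set_pmf_of_set lessThan_empty_iff)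

lemma set_pmf_or_dist_length: "n \<ge> 1 \<Longrightarrow> set_pmf (or_dist n) \<subseteq> {x. length x = n}"
  by (auto simp: set_pmf_or_dist or_point_def)

lemma acc_or_dist:
  "n \<ge> 1 \<Longrightarrow> acc (or_dist n) f g = card {j\<in>{..<2 * n}. g (or_point n j) = f (or_point n j)} / (2 * n)"
  by (simp add: acc_def or_dist_def measure_pmf_of_set lessThan_empty_iff Int_def vimage_def)

text \<open>A circuit either accepts the zero vector, which has mass \<open>1/2\<close>, or it rejects every unit
  vector whose input it does not read.\<close>
lemma acc_or_dist_circuit_le:
  assumes "n \<ge> 1" and dec: "decode_circ h = Some (n, vs)"
  shows "acc (or_dist n) or_fun (\<lambda>x. the (circuit_interp h x)) \<le> (real n + length vs) / (2 * real n)"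
proof -
  define g where "g x = the (circuit_interp h x)" for x
  have g: "length x = n \<Longrightarrow> g x = circ_eval vs x" for x
    by (simp add: g_def circuit_interp_def dec)
  define S where "S = {j\<in>{..<2 * n}. g (or_point n j) = or_fun (or_point n j)}"
  have "card S \<le> n + length vs"
  proof (cases "circ_eval vs (replicate n False)")
    case True
    then have "S \<subseteq> {..<n}"
      using g or_fun_replicate_False by (auto simp: S_def or_point_def)
    then show ?thesis
      using card_mono[of "{..<n}" S] by simp
  next
    case False
    have "j \<in> circ_inputs vs \<union> {n..<2 * n}" if "j \<in> S" for j
    proof (cases "j < n")
      case True
      then have "circ_eval vs (unit_vec n j)"
        using \<open>j \<in> S\<close> g or_fun_unit_vec by (simp add: S_def or_point_def)
      then show ?thesis
        using False circ_eval_unit_vec_unread[OF dec True] by blast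
    qed (use that in \<open>simp add: S_def\<close>)
    then have "S \<subseteq> circ_inputs vs \<union> {n..<2 * n}"
      by blast
    then have "card S \<le> card (circ_inputs vs) + card {n..<2 * n}"
      using card_circ_inputs_le[of vs] card_Un_le[of "circ_inputs vs" "{n..<2 * n}"]
        card_mono[of "circ_inputs vs \<union> {n..<2 * n}" S] by simp
    then show ?thesis
      using card_circ_inputs_le[of vs] by simp
  qed
  then have "real (card S) / (2 * real n) \<le> (real n + length vs) / (2 * real n)"
    by (intro divide_right_mono) auto
  then show ?thesis
    using acc_or_dist[OF assms(1)] by (simp add: S_def g_def)
qed

lemma mdl_success_circuit_or_dist:
  assumes "n \<ge> 1" and xs: "\<forall>j<m. xs j \<in> set_pmf (or_dist n)" and tb: "valid_tb tb"
    and "mdl_success circuit_interp tb n or_fun (or_dist n) \<epsilon> (mk_dataset or_fun m xs)"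
  shows "2 * real n * (1 - \<epsilon>) \<le> real n + 2 * m + 3"
proof -
  define D where "D = mk_dataset or_fun m xs"
  obtain h where h: "consistent circuit_interp n D h" "length h = circ_code_len (3 + 2 * m) n"
    using exists_consistent_or_circuit[OF assms(1)] xs set_pmf_or_dist_length[OF assms(1)]
    unfolding D_def by blast
  define h' where "h' = tb D (mdl_cands circuit_interp n D)"
  note MDL = MDL_of_consistent[OF tb h(1), folded h'_def]
  have "circuit_interp h' (replicate n False) \<noteq> None"
    using MDL(2) by (simp add: consistent_def)
  then obtain vs where dec: "decode_circ h' = Some (n, vs)"
    by (auto simp: circuit_interp_def split: option.splits if_splits)
  have "circ_code_len (length vs) n \<le> circ_code_len (3 + 2 * m) n"
    using MDL(3) h(2) decode_circ_SomeD(1)[OF dec] by simp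
  then have "length vs \<le> 3 + 2 * m"
    by (simp add: circ_code_len_le_iff)
  have "1 - \<epsilon> \<le> acc (or_dist n) or_fun (\<lambda>x. the (circuit_interp h' x))"
    using assms(4) MDL(1) by (simp add: mdl_success_def D_def)
  also have "\<dots> \<le> (real n + length vs) / (2 * real n)"
    by (rule acc_or_dist_circuit_le[OF assms(1) dec])
  also have "\<dots> \<le> (real n + 2 * m + 3) / (2 * real n)"
    using \<open>length vs \<le> 3 + 2 * m\<close> by (intro divide_right_mono) auto
  finally show ?thesis
    using assms(1) by (simp add: le_divide_eq mult.commute)
qed

lemma sample_cx_circuit_or_dist_ge:
  assumes "n \<ge> 1" and "valid_tb tb" and "\<delta> < 1"
  shows "ereal (((1 - 2 * \<epsilon>) * n - 3) / 2)
           \<le> ereal_of_enat (sample_cx circuit_interp tb n or_fun (or_dist n) \<epsilon> \<delta>)"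
proof (rule sample_cx_ge)
  fix m assume "mdl_pac circuit_interp tb n or_fun (or_dist n) \<epsilon> \<delta> m"
  then have "measure_pmf.prob (samples (or_dist n) m)
      {xs. mdl_success circuit_interp tb n or_fun (or_dist n) \<epsilon> (mk_dataset or_fun m xs)} \<noteq> 0"
    using assms(3) by (auto simp: mdl_pac_def)
  then obtain xs where "xs \<in> set_pmf (samples (or_dist n) m)"
    and "mdl_success circuit_interp tb n or_fun (or_dist n) \<epsilon> (mk_dataset or_fun m xs)"
    by (auto simp: measure_pmf_zero_iff)
  then have "2 * real n * (1 - \<epsilon>) \<le> real n + 2 * m + 3"
    using mdl_success_circuit_or_dist[OF assms(1) _ assms(2)] set_pmf_samples by blast
  then show "((1 - 2 * \<epsilon>) * n - 3) / 2 \<le> real m"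
    by (simp add: algebra_simps)
qed

lemma gain_ge_or_dist:
  fixes \<phi> :: interp and m u :: nat
  assumes "valid_tb tbC" and "\<delta> < 1" and "\<epsilon> < 1/2" and "d \<ge> 1"
    and "n \<ge> 1" and "6 / (1 - 2 * \<epsilon>) \<le> n"
    and "sample_cx \<phi> tb\<phi> n or_fun (or_dist n) \<epsilon> \<delta> = enat u" and "1 \<le> u" and "u \<le> m"
    and "desc_len \<phi> n or_fun \<le> enat n"
  shows "ereal ((1 - 2 * \<epsilon>) / (4 * m) * n) \<le> gain \<phi> tb\<phi> circuit_interp tbC \<epsilon> \<delta> n d"
proof -
  define a where "a = ((1 - 2 * \<epsilon>) * n - 3) / 2"
  have "6 \<le> (1 - 2 * \<epsilon>) * n"
    using assms(3,6) by (simp add: divide_le_eq mult.commute)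
  then have "0 \<le> a" and "(1 - 2 * \<epsilon>) * n / 4 \<le> a"
    by (simp_all add: a_def mult.commute)
  then have "ereal ((1 - 2 * \<epsilon>) / (4 * m) * n) \<le> ereal (a / m)"
    using divide_right_mono[of "(1 - 2 * \<epsilon>) * n / 4" a m] by simp
  also have "\<dots> \<le> ereal_of_enat (sample_cx circuit_interp tbC n or_fun (or_dist n) \<epsilon> \<delta>)
      / ereal_of_enat (sample_cx \<phi> tb\<phi> n or_fun (or_dist n) \<epsilon> \<delta>)"
    using ereal_divide_ge[OF sample_cx_circuit_or_dist_ge[OF assms(5,1,2)], where b = u and B = m]
      \<open>0 \<le> a\<close> assms(7-9) by (simp add: a_def)
  also have "\<dots> \<le> gain \<phi> tb\<phi> circuit_interp tbC \<epsilon> \<delta> n d"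
  proof (rule sample_cx_ratio_le_gain[OF set_pmf_or_dist_length[OF assms(5)]])
    have "n \<le> n ^ d"
      using assms(4,5) self_le_power[of n d] by simp
    then show "desc_len \<phi> n or_fun \<le> enat (n ^ d)"
      using assms(10) by (meson enat_ord_simps(1) order_trans)
  qed
  finally show ?thesis .
qed

lemma Uc_learns_or_dist:
  assumes "is_Uc c E U" and "c > 1" and "valid_tb tb" and "0 < \<epsilon>" "\<epsilon> < 1" "0 < \<delta>"
  obtains m where "m \<ge> 1"
    and "\<forall>\<^sub>F n in sequentially. desc_len U n or_fun \<le> enat n \<and>
           (\<exists>u. sample_cx U tb n or_fun (or_dist n) \<epsilon> \<delta> = enat u \<and> 1 \<le> u \<and> u \<le> m)"
proof -
  define h where "h = E scan_tm"
  obtain N where N: "\<And>x. N \<le> length x \<Longrightarrow> U h x = Some (or_fun x)"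
    using is_Uc_computes_or[OF assms(1,2)] unfolding h_def by blast
  obtain m where "m \<ge> 1" and pac: "\<And>n P. \<forall>x. length x = n \<longrightarrow> U h x = Some (or_fun x) \<Longrightarrow>
      set_pmf P \<subseteq> {x. length x = n} \<Longrightarrow> mdl_pac U tb n or_fun P \<epsilon> \<delta> m"
    using occam_sample_size[OF assms(4-6,3), of U h or_fun] by blast
  have "\<forall>\<^sub>F n in sequentially. max (max N 1) (length h) \<le> n"
    by (rule eventually_ge_at_top)
  then have "\<forall>\<^sub>F n in sequentially. desc_len U n or_fun \<le> enat n \<and>
      (\<exists>u. sample_cx U tb n or_fun (or_dist n) \<epsilon> \<delta> = enat u \<and> 1 \<le> u \<and> u \<le> m)"
  proof eventually_elim
    case (elim n)
    then have "n \<ge> 1" and U_or: "\<forall>x. length x = n \<longrightarrow> U h x = Some (or_fun x)"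
      using N by auto
    have "desc_len U n or_fun \<le> enat n"
      using desc_len_le[where \<phi> = U and f = or_fun, OF U_or] elim
      by (meson enat_ord_simps(1) max.boundedE order_trans)
    moreover obtain u where "sample_cx U tb n or_fun (or_dist n) \<epsilon> \<delta> = enat u" "1 \<le> u" "u \<le> m"
      using sample_cx_le[OF \<open>m \<ge> 1\<close> pac[OF U_or set_pmf_or_dist_length[OF \<open>n \<ge> 1\<close>]]] .
    ultimately show ?case
      by blast
  qed
  with \<open>m \<ge> 1\<close> that show ?thesis
    by blast
qed

theorem theorem4:
  fixes \<epsilon> \<delta> \<gamma> :: real and c d :: nat
    and E :: "tm \<Rightarrow> bool list" and U :: interp and tbU tbC :: tiebreak
  assumes "0 < \<epsilon>" "\<epsilon> < 1/2" "0 < \<delta>" "\<delta> < 1"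
    and "c > 1" "d \<ge> 1" "\<gamma> > 0"
    and "tm_encoding E" "is_Uc c E U"
    and "valid_tb tbU" "valid_tb tbC"
  shows "\<exists>K > 0. \<forall>\<^sub>F n in sequentially.
           ereal (K * real n powr (1 - \<gamma>)) \<le> gain U tbU circuit_interp tbC \<epsilon> \<delta> n d"
proof -
  obtain m where "m \<ge> 1" and U_or: "\<forall>\<^sub>F n in sequentially. desc_len U n or_fun \<le> enat n \<and>
      (\<exists>u. sample_cx U tbU n or_fun (or_dist n) \<epsilon> \<delta> = enat u \<and> 1 \<le> u \<and> u \<le> m)"
    using Uc_learns_or_dist[OF assms(9,5,10,1) _ assms(3)] assms(2) by auto
  define K where "K = (1 - 2 * \<epsilon>) / (4 * m)"
  have "K > 0"
    using assms(2) \<open>m \<ge> 1\<close> by (simp add: K_def)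
  have "\<forall>\<^sub>F n in sequentially. 1 \<le> n \<and> 6 / (1 - 2 * \<epsilon>) \<le> real n"
    by (intro eventually_conj eventually_ge_at_top)
      (simp add: eventually_sequentially, meson nat_ceiling_le_eq order_refl)
  with U_or have "\<forall>\<^sub>F n in sequentially.
      ereal (K * real n powr (1 - \<gamma>)) \<le> gain U tbU circuit_interp tbC \<epsilon> \<delta> n d"
  proof eventually_elim
    case (elim n)
    then have "ereal (K * n) \<le> gain U tbU circuit_interp tbC \<epsilon> \<delta> n d"
      unfolding K_def using gain_ge_or_dist[OF assms(11,4,2,6)] by blast
    moreover have "K * real n powr (1 - \<gamma>) \<le> K * real n"
      using \<open>K > 0\<close> elim assms(7) powr_mono[of "1 - \<gamma>" 1 "real n"] by simp
    ultimately show ?case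
      by (meson ereal_less_eq(3) order_trans)
  qed
  with \<open>K > 0\<close> show ?thesis
    by blast
qed

end
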